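(* Let $d_0<d_1<\cdots$ be the increasing enumeration of $\{m\ge1:\ c_m=0\}$ and $z_n=\left(\frac{d_{4n}+1}{4}-n\right)\bmod 2$ for $n\ge0$. For every integer $m\ge2$ there exists a positive integer $n$ with $m\mid n$ and $z_n=1$.
   Context: For $n\in\mathbb{N}$ let $s_2(n)$ be the sum of the binary digits of $n$ and $t_n=s_2(n)\bmod 2$ (the Prouhet–Thue–Morse sequence). Let $F(X)=\sum_{n\ge1}t_nX^n\in\mathbb{F}_2[[X]]$ and let $G(X)=\sum_{n\ge1}c_nX^n\in\mathbb{F}_2[[X]]$ be its compositional inverse, i.e. $F(G(X))=G(F(X))=X$. The $c_n$ are identified with integers in $\{0,1\}$. The sequence $(d_n)$ is indexed from $0$, so $d_0=3$, and $\frac{d_{4n}+1}{4}$ is always an integer. *)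

theory Defs
  imports "HOL-Library.Z2" "HOL-Library.Infinite_Set"
          "HOL-Computational_Algebra.Formal_Power_Series"
begin

fun s2 :: "nat \<Rightarrow> nat" where
  "s2 n = (if n = 0 then 0 else n mod 2 + s2 (n div 2))"

definition tm :: "nat \<Rightarrow> bit" where
  "tm n = of_nat (s2 n mod 2)"

definition TM_F :: "bit fps" where
  "TM_F = Abs_fps (\<lambda>n. if n = 0 then 0 else tm n)"

definition dseq :: "bit fps \<Rightarrow> nat \<Rightarrow> nat" where
  "dseq G k = enumerate {m. m \<ge> 1 \<and> fps_nth G m = 0} k"

definition zseq :: "bit fps \<Rightarrow> nat \<Rightarrow> int" where
  "zseq G n = ((int (dseq G (4 * n)) + 1) div 4 - int n) mod 2"

end

(*
  Over F_2 the Thue--Morse series F satisfies (1+X)^3 F^2 + (1+X)^2 F + X = 0: this follows from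
  t(2n) = t(n), t(2n+1) = t(n) + 1 and the Frobenius identity A^2 = A(X^2). Substituting a series
  G for X, F(G) and X are two roots of the same quadratic (1+G)^3 Y^2 + (1+G)^2 Y + G, so F(G) = X
  as soon as G satisfies the cubic (1+G)^3 X^2 + (1+G)^2 X + G = 0. That cubic says that
  u = X G + 1 + X is a cube root of 1 + X, and such a cube root is u = (1+X)^3 K(X^8), where K is
  the generating series of the Moser--de Bruijn numbers (base-4 digits 0 and 1 only), because
  K = (1+X) K^4. Hence c(p) = 1 exactly when (p+1) mod 8 < 4 and (p+1) div 8 is a Moser--de Bruijn
  number.

  Counting, G has exactly 4 (2*4^k - 2^k) zero coefficients c(1), ..., c(8*4^k + 2) and c(8*4^k + 3)
  = 0, so d(4n) = 8*4^k + 3 and z(n) = (1 + 2^k) mod 2 = 1 for n = 2^k (2^(k+1) - 1). Every m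
  divides such an n, since 2^l mod m is eventually periodic.
*)

theory Submission
  imports Defs "HOL-Library.Disjoint_Sets"
begin

unbundle fps_syntax

section \<open>Power series in characteristic 2\<close>

lemma CHAR_bit [simp]: "CHAR(bit) = 2"
  by (rule CHAR_eq_posI) (auto simp: less_2_cases_iff)

lemma two_eq_0_CHAR_2:
  assumes "CHAR('a::semiring_1) = 2" shows "(2::'a) = 0"
  using of_nat_CHAR[where 'a='a] assms by simp

lemma fps_square_nth_CHAR_2:
  fixes f :: "'a::comm_ring_1 fps"
  assumes "CHAR('a) = 2"
  shows "(f^2) $ n = (if even n then (f $ (n div 2))^2 else 0)"
proof -
  let ?g = "\<lambda>k. f $ k * f $ (n - k)"
  have off_diagonal: "(\<Sum>k\<in>{k. k \<le> n \<and> 2 * k \<noteq> n}. ?g k) = 0"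
  proof (rule sum_involution_eq_0[where h = "\<lambda>k. n - k"])
    show "?g (n - k) + ?g k = 0" if "k \<in> {k. k \<le> n \<and> 2 * k \<noteq> n}" for k
      using that two_eq_0_CHAR_2[OF assms] by (simp add: mult.commute flip: mult_2)
  qed auto
  have split: "{..n} = {k. k \<le> n \<and> 2 * k \<noteq> n} \<union> {k. k \<le> n \<and> 2 * k = n}" by auto
  have "(f^2) $ n = (\<Sum>k\<in>{k. k \<le> n \<and> 2 * k = n}. ?g k)"
    unfolding fps_square_nth split by (subst sum.union_disjoint) (auto simp: off_diagonal)
  also have "\<dots> = (if even n then (f $ (n div 2))^2 else 0)"
  proof (cases "even n")
    case True
    then obtain m where n: "n = 2 * m" ..
    then have "{k. k \<le> n \<and> 2 * k = n} = {m}" by auto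
    then show ?thesis using n by (simp add: power2_eq_square)
  next
    case False
    then have "{k. k \<le> n \<and> 2 * k = n} = {}" by auto
    then show ?thesis using False by (simp only: sum.empty if_False)
  qed
  finally show ?thesis .
qed

lemma fps_compose_X_power_nth:
  assumes "0 < q"
  shows "(f oo fps_X ^ q) $ n = (if q dvd n then f $ (n div q) else 0)"
proof -
  have "(f oo fps_X ^ q) $ n = (\<Sum>i=0..n. if i = n div q \<and> q dvd n then f $ i else 0)"
    unfolding fps_compose_nth
    by (intro sum.cong refl) (use assms in \<open>auto simp flip: power_mult\<close>)
  also have "\<dots> = (if q dvd n then f $ (n div q) else 0)"
    by simp
  finally show ?thesis .
qed

lemma sum_X_power_mult_compose_X_power_nth:
  fixes f :: "'a::comm_ring_1 fps"
  assumes "r \<le> q"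
  shows "((\<Sum>j<r. fps_X ^ j) * (f oo fps_X ^ q)) $ n
           = (if n mod q < r then f $ (n div q) else 0)"
proof (cases "r = 0")
  case False
  then have q: "0 < q" using assms by simp
  have shifted: "(fps_X ^ j * (f oo fps_X ^ q)) $ n = (if n mod q = j then f $ (n div q) else 0)"
    if "j < q" for j
  proof (cases "j \<le> n")
    case True
    then have "q dvd n - j \<longleftrightarrow> n mod q = j"
      using that mod_eq_dvd_iff_nat[OF True, of q] by simp
    moreover have "n mod q = j \<Longrightarrow> (n - j) div q = n div q"
      by (metis minus_mod_eq_mult_div nonzero_mult_div_cancel_left q not_gr0)
    ultimately show ?thesis
      using True q by (simp add: fps_X_power_mult_nth fps_compose_X_power_nth)
  qed (use that in \<open>auto simp: fps_X_power_mult_nth\<close>)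
  have "((\<Sum>j<r. fps_X ^ j) * (f oo fps_X ^ q)) $ n
      = (\<Sum>j<r. if n mod q = j then f $ (n div q) else 0)"
    unfolding sum_distrib_right fps_sum_nth using assms by (intro sum.cong refl shifted) simp
  then show ?thesis by simp
qed simp

lemma fps_one_plus_X_compose_X_power:
  "0 < q \<Longrightarrow> (1 + fps_X) oo fps_X ^ q = 1 + (fps_X :: 'a::comm_ring_1 fps) ^ q"
  by (simp add: fps_compose_add_distrib)

lemma fps_left_inverse_eq_right_inverse:
  fixes f g h :: "'a::idom fps"
  assumes "g oo f = fps_X" "f oo h = fps_X" "f $ 0 = 0" "h $ 0 = 0"
  shows "g = h"
proof -
  have "g = g oo (f oo h)" by (simp add: assms(2))
  also have "\<dots> = (g oo f) oo h" by (rule fps_compose_assoc) (use assms in auto)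
  finally show ?thesis using assms by simp
qed

lemma quadratic_roots_eqI:
  fixes a b c x y :: "'a::idom"
  assumes "a * x^2 + b * x + c = 0" "a * y^2 + b * y + c = 0" "a * (x + y) + b \<noteq> 0"
  shows "x = y"
proof -
  have "(x - y) * (a * (x + y) + b) = (a * x^2 + b * x + c) - (a * y^2 + b * y + c)"
    by algebra
  then show ?thesis using assms by simp
qed

lemma bit_fps_two_eq_0: "(2 :: bit fps) = 0"
  by (rule two_eq_0_CHAR_2) simp

lemma bit_fps_add_eq_0_iff: "(f :: bit fps) + g = 0 \<longleftrightarrow> f = g"
proof -
  have "-f = f" by (rule uminus_CHAR_2) simp
  then show ?thesis using neg_eq_iff_add_eq_0[of f g] by metis
qed

lemma bit_fps_square: "(f :: bit fps)^2 = f oo fps_X ^ 2"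
  by (rule fps_ext) (simp add: fps_square_nth_CHAR_2 fps_compose_X_power_nth)

lemma bit_fps_power_power_2: "(f :: bit fps) ^ (2 ^ j) = f oo fps_X ^ (2 ^ j)"
proof (induction j)
  case 0
  show ?case by simp
next
  case (Suc j)
  have "f ^ (2 ^ Suc j) = (f oo fps_X ^ (2 ^ j)) ^ 2"
    by (simp only: power_Suc2 power_mult Suc.IH)
  also have "\<dots> = f oo (fps_X ^ (2 ^ j) oo fps_X ^ 2)"
    by (simp add: bit_fps_square[of "f oo fps_X ^ 2 ^ j"] fps_compose_assoc)
  also have "fps_X ^ (2 ^ j) oo fps_X ^ 2 = (fps_X :: bit fps) ^ (2 ^ Suc j)"
    by (simp add: power_mult flip: fps_compose_power)
  finally show ?case .
qed

lemma bit_fps_one_plus_X_square: "(1 + fps_X :: bit fps)^2 = 1 + fps_X^2"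
  unfolding bit_fps_square[of "1 + fps_X"] by (rule fps_one_plus_X_compose_X_power) simp

lemma bit_fps_one_plus_X_cube: "(1 + fps_X :: bit fps)^3 = (\<Sum>j<4. fps_X ^ j)"
proof -
  have "(1 + fps_X :: bit fps)^3 = 1 + fps_X + fps_X ^ 2 + fps_X ^ 3"
    by (simp add: algebra_simps power2_eq_square power3_eq_cube bit_fps_two_eq_0)
  also have "\<dots> = (\<Sum>j<4. fps_X ^ j)"
    by (simp add: eval_nat_numeral)
  finally show ?thesis .
qed

section \<open>The Thue--Morse series\<close>

declare s2.simps [simp del]

lemma tm_eq_of_bool: "tm n = of_bool (odd (s2 n))"
  by (simp add: tm_def odd_iff_mod_2_eq_one)

lemma tm_eq_tm_div_2: "tm n = tm (n div 2) + of_bool (odd n)"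
proof -
  have "s2 n = n mod 2 + s2 (n div 2)"
    by (cases "n = 0") (simp_all add: s2.simps[of n] s2.simps[of 0])
  then show ?thesis by (auto simp: tm_eq_of_bool)
qed

lemma TM_F_nth: "TM_F $ n = tm n"
  by (simp add: TM_F_def tm_eq_of_bool s2.simps[of 0])

lemma TM_F_even_odd_decomposition:
  "TM_F = (1 + fps_X) * TM_F^2 + Abs_fps (\<lambda>n. of_bool (odd n))"
proof (rule fps_ext)
  fix n
  have "(1 + fps_X :: bit fps) = (\<Sum>j<2. fps_X ^ j)"
    by (simp add: numeral_2_eq_2)
  then have "(1 + fps_X) * TM_F^2 = (\<Sum>j<2. fps_X ^ j) * (TM_F oo fps_X ^ 2)"
    by (simp only: bit_fps_square[of TM_F])
  then have "((1 + fps_X) * TM_F^2) $ n = tm (n div 2)"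
    by (simp add: sum_X_power_mult_compose_X_power_nth TM_F_nth)
  then show "TM_F $ n = ((1 + fps_X) * TM_F^2 + Abs_fps (\<lambda>n. of_bool (odd n))) $ n"
    by (simp add: TM_F_nth tm_eq_tm_div_2[of n])
qed

lemma one_plus_X_square_mult_odd_indicator:
  "(1 + fps_X^2) * Abs_fps (\<lambda>n. of_bool (odd n)) = (fps_X :: bit fps)"
  by (rule fps_ext) (auto simp: distrib_right fps_X_power_mult_nth less_2_cases_iff)

lemma TM_F_functional_equation:
  "(1 + fps_X)^3 * TM_F^2 + (1 + fps_X)^2 * TM_F + fps_X = 0"
proof -
  let ?D = "Abs_fps (\<lambda>n. of_bool (odd n)) :: bit fps"
  have "(1 + fps_X)^2 * TM_F = (1 + fps_X)^2 * ((1 + fps_X) * TM_F^2 + ?D)"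
    by (simp only: TM_F_even_odd_decomposition[symmetric])
  also have "\<dots> = (1 + fps_X)^3 * TM_F^2 + (1 + fps_X)^2 * ?D"
    by (simp add: distrib_left power3_eq_cube power2_eq_square mult.assoc)
  also have "(1 + fps_X)^2 * ?D = fps_X"
    by (simp only: bit_fps_one_plus_X_square one_plus_X_square_mult_odd_indicator)
  finally show ?thesis
    using bit_fps_add_eq_0_iff[of "(1 + fps_X)^3 * TM_F^2 + fps_X" "(1 + fps_X)^2 * TM_F"]
    by (simp add: add_ac)
qed

section \<open>The compositional inverse\<close>

fun moser_de_bruijn :: "nat \<Rightarrow> bool" where
  "moser_de_bruijn n = (if n = 0 then True else n mod 4 < 2 \<and> moser_de_bruijn (n div 4))"

declare moser_de_bruijn.simps [simp del]

lemma moser_de_bruijn_0 [simp]: "moser_de_bruijn 0"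
  by (simp add: moser_de_bruijn.simps)

lemma moser_de_bruijn_iff: "moser_de_bruijn n \<longleftrightarrow> n mod 4 < 2 \<and> moser_de_bruijn (n div 4)"
  by (cases "n = 0") (simp_all add: moser_de_bruijn.simps[of n] moser_de_bruijn.simps[of 0])

definition moser_de_bruijn_fps :: "bit fps" where
  "moser_de_bruijn_fps = Abs_fps (\<lambda>n. of_bool (moser_de_bruijn n))"

lemma moser_de_bruijn_fps_eq: "moser_de_bruijn_fps = (1 + fps_X) * moser_de_bruijn_fps ^ 4"
proof (rule fps_ext)
  fix n
  have "(1 + fps_X :: bit fps) = (\<Sum>j<2. fps_X ^ j)"
    by (simp add: numeral_2_eq_2)
  moreover have "moser_de_bruijn_fps ^ 4 = moser_de_bruijn_fps oo fps_X ^ 4"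
    using bit_fps_power_power_2[of moser_de_bruijn_fps 2] by simp
  ultimately show "moser_de_bruijn_fps $ n = ((1 + fps_X) * moser_de_bruijn_fps ^ 4) $ n"
    by (simp add: sum_X_power_mult_compose_X_power_nth moser_de_bruijn_fps_def
        moser_de_bruijn_iff[of n])
qed

definition cbrt_1_plus_X :: "bit fps" where
  "cbrt_1_plus_X = (1 + fps_X)^3 * (moser_de_bruijn_fps oo fps_X ^ 8)"

lemma cbrt_1_plus_X_nth:
  "cbrt_1_plus_X $ n = of_bool (n mod 8 < 4 \<and> moser_de_bruijn (n div 8))"
  by (simp add: cbrt_1_plus_X_def bit_fps_one_plus_X_cube sum_X_power_mult_compose_X_power_nth
      moser_de_bruijn_fps_def)

lemma cbrt_1_plus_X_cube: "cbrt_1_plus_X ^ 3 = 1 + fps_X"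
proof -
  let ?u = cbrt_1_plus_X and ?K = "moser_de_bruijn_fps oo fps_X ^ 8"
  have "?K = ((1 + fps_X) oo fps_X ^ 8) * (moser_de_bruijn_fps ^ 4 oo fps_X ^ 8)"
    by (subst moser_de_bruijn_fps_eq) (simp add: fps_compose_mult_distrib)
  also have "\<dots> = (1 + fps_X) ^ 8 * ?K ^ 4"
    using bit_fps_power_power_2[of "1 + fps_X" 3]
    by (simp add: fps_compose_power fps_one_plus_X_compose_X_power)
  finally have K: "?K = (1 + fps_X) ^ 8 * ?K ^ 4" .
  have "?u * ?u ^ 3 = (1 + fps_X) ^ 4 * ((1 + fps_X) ^ 8 * ?K ^ 4)"
    by (simp add: cbrt_1_plus_X_def power_mult_distrib mult_ac flip: power_add power_Suc)
  also have "\<dots> = ?u * (1 + fps_X)"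
    by (simp add: cbrt_1_plus_X_def mult_ac flip: K power_Suc)
  finally have "?u * ?u ^ 3 = ?u * (1 + fps_X)" .
  moreover have "?u \<noteq> 0"
    by (rule fps_nonzeroI[of _ 0]) (simp add: cbrt_1_plus_X_nth)
  ultimately show ?thesis by simp
qed

definition TM_G :: "bit fps" where
  "TM_G = Abs_fps (\<lambda>n.
     of_bool (n \<noteq> 0 \<and> (n + 1) mod 8 < 4 \<and> moser_de_bruijn ((n + 1) div 8)))"

lemma TM_G_nth:
  "TM_G $ n = of_bool (n \<noteq> 0 \<and> (n + 1) mod 8 < 4 \<and> moser_de_bruijn ((n + 1) div 8))"
  by (simp add: TM_G_def)

lemma TM_G_nth_0 [simp]: "TM_G $ 0 = 0"
  by (simp add: TM_G_nth)

lemma fps_X_mult_TM_G: "fps_X * TM_G = cbrt_1_plus_X + 1 + fps_X"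
proof (rule fps_ext)
  fix n :: nat
  consider "n = 0" | "n = 1" | "n \<ge> 2" by linarith
  then show "(fps_X * TM_G) $ n = (cbrt_1_plus_X + 1 + fps_X) $ n"
    by cases (auto simp: TM_G_nth cbrt_1_plus_X_nth)
qed

lemma TM_G_cubic: "(1 + TM_G)^3 * fps_X^2 + (1 + TM_G)^2 * fps_X + TM_G = 0"
proof -
  let ?u = cbrt_1_plus_X and ?W = "fps_X * TM_G"
  have "fps_X + ?W = ?u + 1 + 2 * fps_X"
    unfolding fps_X_mult_TM_G by algebra
  then have uW: "fps_X + ?W = ?u + 1"
    by (simp add: bit_fps_two_eq_0)
  have "(?u + 1)^3 + (?u + 1)^2 + ?W = (?u^3 + (1 + fps_X)) + 2 * (2 * ?u^2 + 3 * ?u + 1)"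
    unfolding fps_X_mult_TM_G by algebra
  also have "\<dots> = 0"
    by (simp add: cbrt_1_plus_X_cube bit_fps_two_eq_0 bit_fps_add_eq_0_iff)
  finally have "(fps_X + ?W)^3 + (fps_X + ?W)^2 + ?W = 0"
    by (simp only: uW)
  moreover have "fps_X^3 * ((1 + TM_G)^3 * fps_X^2 + (1 + TM_G)^2 * fps_X + TM_G)
      = fps_X^2 * ((fps_X + ?W)^3 + (fps_X + ?W)^2 + ?W)"
    by algebra
  ultimately show ?thesis by simp
qed

lemma TM_F_compose_TM_G: "TM_F oo TM_G = fps_X"
proof (rule quadratic_roots_eqI[where a = "(1 + TM_G)^3" and b = "(1 + TM_G)^2" and c = TM_G])
  have "((1 + fps_X)^3 * TM_F^2 + (1 + fps_X)^2 * TM_F + fps_X) oo TM_G = 0"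
    by (simp only: TM_F_functional_equation fps_compose_0)
  then show "(1 + TM_G)^3 * (TM_F oo TM_G)^2 + (1 + TM_G)^2 * (TM_F oo TM_G) + TM_G = 0"
    by (simp add: fps_compose_add_distrib fps_compose_mult_distrib flip: fps_compose_power)
  show "(1 + TM_G)^3 * fps_X^2 + (1 + TM_G)^2 * fps_X + TM_G = 0"
    by (rule TM_G_cubic)
  show "(1 + TM_G)^3 * ((TM_F oo TM_G) + fps_X) + (1 + TM_G)^2 \<noteq> 0"
    by (rule fps_nonzeroI[of _ 0]) (simp add: TM_F_nth tm_eq_of_bool s2.simps[of 0])
qed

section \<open>Zeros of the inverse\<close>

lemma card_restrict_mod_div:
  fixes b c M :: nat
  assumes "c \<le> b"
  shows "card {n. n < b * M \<and> n mod b < c \<and> P (n div b)} = c * card {v. v < M \<and> P v}"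
proof (cases "c = 0")
  case False
  then have b: "0 < b" using assms by simp
  let ?digits = "\<lambda>(v, r). b * v + r"
  have "{n. n < b * M \<and> n mod b < c \<and> P (n div b)} = ?digits ` ({v. v < M \<and> P v} \<times> {..<c})"
  proof (intro equalityI subsetI)
    fix n assume "n \<in> {n. n < b * M \<and> n mod b < c \<and> P (n div b)}"
    then have "(n div b, n mod b) \<in> {v. v < M \<and> P v} \<times> {..<c}"
      by (auto simp: div_less_iff_less_mult b mult.commute)
    then show "n \<in> ?digits ` ({v. v < M \<and> P v} \<times> {..<c})"
      by (rule rev_image_eqI) simp
  next
    fix n assume "n \<in> ?digits ` ({v. v < M \<and> P v} \<times> {..<c})"
    then obtain v r where "n = b * v + r" "v < M" "P v" "r < c" by auto
    moreover have "b * v + r < b * M"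
      using \<open>v < M\<close> \<open>r < c\<close> assms mult_le_mono2[of "Suc v" M b] by simp
    ultimately show "n \<in> {n. n < b * M \<and> n mod b < c \<and> P (n div b)}"
      using assms by simp
  qed
  moreover have "inj_on ?digits ({v. v < M \<and> P v} \<times> {..<c})"
  proof (rule inj_onI, clarify)
    fix v r v' r' assume "r < c" "r' < c" and eq: "b * v + r = b * v' + r'"
    then have "r < b" "r' < b" using assms by simp_all
    then have "v = (b * v + r) div b" "r = (b * v + r) mod b"
        "v' = (b * v' + r') div b" "r' = (b * v' + r') mod b"
      using b by simp_all
    then show "v = v' \<and> r = r'" using eq by metis
  qed
  ultimately show ?thesis
    by (simp add: card_image card_cartesian_product)
qed simp

lemma moser_de_bruijn_power_4: "moser_de_bruijn (4 ^ k)"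
proof (induction k)
  case 0
  show ?case using moser_de_bruijn_iff[of 1] by simp
next
  case (Suc k)
  then show ?case using moser_de_bruijn_iff[of "4 ^ Suc k"] by simp
qed

lemma card_moser_de_bruijn_less_power_4: "card {v. v < 4 ^ k \<and> moser_de_bruijn v} = 2 ^ k"
proof (induction k)
  case 0
  have "{v. v < 4 ^ 0 \<and> moser_de_bruijn v} = {0}" by auto
  then show ?case by simp
next
  case (Suc k)
  have "{v. v < 4 ^ Suc k \<and> moser_de_bruijn v}
      = {v. v < 4 * 4 ^ k \<and> v mod 4 < 2 \<and> moser_de_bruijn (v div 4)}"
    by (intro Collect_cong, subst moser_de_bruijn_iff) simp
  then show ?case
    using card_restrict_mod_div[of 2 4 "4 ^ k" moser_de_bruijn] Suc by simp
qed

lemma card_TM_G_zeros_below: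
  "card {p. 1 \<le> p \<and> p < 8 * 4 ^ k + 3 \<and> TM_G $ p = 0} = 8 * 4 ^ k - 4 * 2 ^ k"
proof -
  define N :: nat where "N = 8 * 4 ^ k + 3"
  define Q where "Q = {q. q < 8 * (4 ^ k + 1) \<and> q mod 8 < 4 \<and> moser_de_bruijn (q div 8)}"
  define Ones where "Ones = {p. 1 \<le> p \<and> p < N \<and> TM_G $ p \<noteq> 0}"
  have "{v. v < 4 ^ k + 1 \<and> moser_de_bruijn v}
      = insert (4 ^ k) {v. v < 4 ^ k \<and> moser_de_bruijn v}"
    using moser_de_bruijn_power_4 by auto
  then have card_Q: "card Q = 4 * (2 ^ k + 1)"
    unfolding Q_def using card_restrict_mod_div[of 4 8 "4 ^ k + 1" moser_de_bruijn]
    by (simp add: card_moser_de_bruijn_less_power_4)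
  have "Suc ` Ones = Q - {0, 1}"
  proof (intro equalityI subsetI)
    fix q assume "q \<in> Suc ` Ones"
    then show "q \<in> Q - {0, 1}" by (auto simp: Ones_def Q_def N_def TM_G_nth)
  next
    fix q assume q: "q \<in> Q - {0, 1}"
    then have "q div 8 \<le> 4 ^ k" "q mod 8 < 4" by (auto simp: Q_def)
    then have "q \<le> N" using div_mult_mod_eq[of q 8] unfolding N_def by linarith
    then have "q - 1 \<in> Ones" using q by (auto simp: Ones_def Q_def TM_G_nth)
    then show "q \<in> Suc ` Ones" using q by (intro rev_image_eqI[of "q - 1"]) auto
  qed
  moreover have "finite Q" "{0, 1} \<subseteq> Q" by (auto simp: Q_def)
  ultimately have card_Ones: "card Ones = 4 * 2 ^ k + 2"
    using card_Q card_image[of Suc Ones] by (simp add: card_Diff_subset)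
  have "{p. 1 \<le> p \<and> p < N \<and> TM_G $ p = 0} = {1..<N} - Ones"
    by (auto simp: Ones_def)
  then have "card {p. 1 \<le> p \<and> p < N \<and> TM_G $ p = 0} = (N - 1) - card Ones"
    by (simp add: card_Diff_subset Ones_def subset_eq)
  then show ?thesis using card_Ones by (simp add: N_def)
qed

lemma enumerate_card_less:
  fixes S :: "nat set"
  assumes "infinite S" "x \<in> S"
  shows "enumerate S (card {y\<in>S. y < x}) = x"
proof -
  obtain j where j: "enumerate S j = x" using enumerate_Ex[OF assms] by blast
  have "{y\<in>S. y < x} = enumerate S ` {..<j}"
  proof (intro equalityI subsetI)
    fix y assume "y \<in> {y\<in>S. y < x}"
    moreover obtain l where "enumerate S l = y" using enumerate_Ex[OF assms(1)] calculation by blast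
    ultimately show "y \<in> enumerate S ` {..<j}" using j assms(1) by auto
  qed (use j assms(1) enumerate_in_set in auto)
  then have "card {y\<in>S. y < x} = j"
    using card_image[OF inj_on_subset[OF inj_enumerate[OF assms(1)]]] by simp
  then show ?thesis using j by simp
qed

lemma dseq_TM_G: "dseq TM_G (4 * (2 * 4 ^ k - 2 ^ k)) = 8 * 4 ^ k + 3"
proof -
  let ?Z = "{m. 1 \<le> m \<and> TM_G $ m = 0}"
  have in_Z: "8 * b + 3 \<in> ?Z" for b by (simp add: TM_G_nth)
  have "infinite ?Z"
    unfolding infinite_nat_iff_unbounded_le
  proof
    show "\<exists>n\<ge>b. n \<in> ?Z" for b using in_Z[of b] by (intro exI[of _ "8 * b + 3"]) simp
  qed
  moreover have "8 * 4 ^ k + 3 \<in> ?Z" by fact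
  moreover have "{y \<in> ?Z. y < 8 * 4 ^ k + 3}
      = {p. 1 \<le> p \<and> p < 8 * 4 ^ k + 3 \<and> TM_G $ p = 0}"
    by auto
  then have "card {y \<in> ?Z. y < 8 * 4 ^ k + 3} = 4 * (2 * 4 ^ k - 2 ^ k)"
    using card_TM_G_zeros_below[of k] by (simp add: right_diff_distrib')
  ultimately show ?thesis
    unfolding dseq_def using enumerate_card_less[of ?Z "8 * 4 ^ k + 3"] by simp
qed

lemma zseq_TM_G:
  assumes "1 \<le> k"
  shows "zseq TM_G (2 ^ k * (2 ^ (k + 1) - 1)) = 1"
proof -
  have "(2::nat) ^ k \<le> 2 * 4 ^ k"
    using power_mono[of "2::nat" 4 k] by simp
  moreover have "(2::nat) ^ k * (2 ^ (k + 1) - 1) = 2 * 4 ^ k - 2 ^ k"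
    using power_mult_distrib[of "2::nat" 2 k] by (simp add: right_diff_distrib')
  ultimately have "zseq TM_G (2 ^ k * (2 ^ (k + 1) - 1)) = (1 + 2 ^ k) mod 2"
    by (simp add: zseq_def dseq_TM_G)
  then show ?thesis using assms by (cases k) simp_all
qed

lemma ex_dvd_power_mult_power_Suc_minus_1:
  fixes x m :: nat
  assumes "0 < m"
  shows "\<exists>k \<ge> 1. m dvd x ^ k * (x ^ (k + 1) - 1)"
proof -
  have "finite (range (\<lambda>l. x ^ l mod m))"
    by (rule finite_subset[of _ "{..<m}"]) (use assms in auto)
  then obtain a where "infinite {l. x ^ l mod m = x ^ a mod m}"
    using pigeonhole_infinite[of UNIV "\<lambda>l. x ^ l mod m"] by auto
  then obtain b where "a < b" "x ^ b mod m = x ^ a mod m"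
    unfolding infinite_nat_iff_unbounded by blast
  define t where "t = b - a"
  have t: "0 < t" "x ^ (a + t) mod m = x ^ a mod m"
    using \<open>a < b\<close> \<open>x ^ b mod m = x ^ a mod m\<close> by (simp_all add: t_def)
  have periodic: "x ^ (i + c * t) mod m = x ^ i mod m" if "a \<le> i" for i c
  proof (induction c)
    case (Suc c)
    have "i + Suc c * t = (i - a + c * t) + (a + t)" using that by simp
    then have "x ^ (i + Suc c * t) = x ^ (i - a + c * t) * x ^ (a + t)"
      by (simp only: power_add)
    also have "\<dots> mod m = x ^ (i - a + c * t) * x ^ a mod m"
      using t(2) by (metis mod_mult_right_eq)
    also have "x ^ (i - a + c * t) * x ^ a = x ^ (i + c * t)"
      using that by (simp flip: power_add)
    finally show ?case using Suc by simp
  qed simp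
  define k where "k = (a + 2) * t - 1"
  have "a + 2 \<le> (a + 2) * t" using mult_le_mono2[of 1 t "a + 2"] t(1) by simp
  then have k: "k + 1 = (a + 2) * t" "1 \<le> k" "a \<le> k" by (simp_all add: k_def)
  have "x ^ (k + (k + 1)) mod m = x ^ k mod m"
    using periodic[of k "a + 2"] k by simp
  moreover have "x ^ k \<le> x ^ (k + (k + 1))"
  proof (cases "x = 0")
    case False
    then show ?thesis by (intro power_increasing) simp_all
  qed (use k(2) in simp)
  ultimately have "m dvd x ^ (k + (k + 1)) - x ^ k"
    using mod_eq_dvd_iff_nat by blast
  also have "x ^ (k + (k + 1)) - x ^ k = x ^ k * (x ^ (k + 1) - 1)"
    by (simp add: power_add right_diff_distrib' mult_ac)
  finally show ?thesis using k(2) by blast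
qed

theorem mainTheorem13:
  fixes G :: "bit fps"
  assumes "fps_nth G 0 = 0"
    and "TM_F oo G = fps_X"
    and "G oo TM_F = fps_X"
  shows "\<forall>m::nat. m \<ge> 2 \<longrightarrow> (\<exists>n::nat. n > 0 \<and> m dvd n \<and> zseq G n = 1)"
proof (intro allI impI)
  fix m :: nat
  assume "m \<ge> 2"
  have "TM_F $ 0 = 0" by (simp add: TM_F_def)
  then have G: "G = TM_G"
    using fps_left_inverse_eq_right_inverse[OF assms(3) TM_F_compose_TM_G] by simp
  obtain k where "k \<ge> 1" "m dvd 2 ^ k * (2 ^ (k + 1) - 1)"
    using ex_dvd_power_mult_power_Suc_minus_1[of m 2] \<open>m \<ge> 2\<close> by auto
  moreover have "0 < (2::nat) ^ k * (2 ^ (k + 1) - 1)"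
    using one_less_power[of "2::nat" "k + 1"] by simp
  ultimately show "\<exists>n. n > 0 \<and> m dvd n \<and> zseq G n = 1"
    using zseq_TM_G G by blast
qed

end
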